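(* Let $H$ be a non-degenerate Hamiltonian of a $d$-dimensional quantum system, and consider a differentiable activation trajectory $S(E)$ in the region of the energy-entropy plane corresponding to full-rank passive states (so $\mathrm{d}S/\mathrm{d}E\le0$ along the trajectory, traversed in the direction of decreasing $E$ / increasing $S$). Then along this trajectory the asymptotic ergotropy $W_{\max}$ and the minimal $\beta$-athermality $\Delta S_{\max}$ are both monotonically non-decreasing functions of the geometric athermality $\mathcal A$, i.e. $\frac{\mathrm{d}\mathcal A}{\mathrm{d}W_{\max}}\ge0$ and $\frac{\mathrm{d}\mathcal A}{\mathrm{d}\Delta S_{\max}}\ge0$.
   Context: For $\beta\ge0$, $\gamma_\beta=e^{-\beta H}/\mathrm{tr}\,e^{-\beta H}$; $E(\sigma)=\mathrm{tr}[H\sigma]$, $S(\sigma)=-\mathrm{tr}[\sigma\log\sigma]$. For a point $(E,S)$: $W_{\max}(E,S)=E-E(\gamma_{\beta_{\max}})$ where $\beta_{\max}$ satisfies $S(\gamma_{\beta_{\max}})=S$, and $\Delta S_{\max}(E,S)=S(\gamma_{\beta_{\min}})-S$ where $\beta_{\min}$ satisfies $E(\gamma_{\beta_{\min}})=E$. A state is passive if $\mathrm{tr}(HU\rho U^\dagger)\ge\mathrm{tr}(H\rho)$ for all unitaries $U$; a full-rank passive state is $\rho=\sum_ip_i|e_i\rangle\langle e_i|$ in an eigenbasis $\{|e_i\rangle\}$ of $H=\sum_i\epsilon_i|e_i\rangle\langle e_i|$. Its $\epsilon$-$s$ ensemble is $\{(\epsilon_i,-\log p_i)\}\subset\mathbb{R}^2$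 and $A(\rho)$ is the area of its convex hull. The geometric athermality is $\mathcal A(E,S)=\inf\{A(\rho):\rho$ full-rank passive, $E(\rho)=E$, $S(\rho)=S\}$. An activation trajectory is a curve in the $(E,S)$-plane whose tangent $(u_E,u_S)$ satisfies $u_E\le0$, $u_S\ge0$ everywhere. *)

theory Defs
  imports "HOL-Analysis.Analysis"
begin

text \<open>A d-dimensional quantum system with Hamiltonian H = sum_i eps i |e_i><e_i|,
  i < d. All states relevant here (Gibbs states, passive states) are diagonal in the
  eigenbasis, so they are represented by their population vectors p :: nat => real
  on the index set {..<d}.\<close>

definition nondegenerate :: "nat \<Rightarrow> (nat \<Rightarrow> real) \<Rightarrow> bool" where
  "nondegenerate d eps \<longleftrightarrow> inj_on eps {..<d}"

definition energy :: "nat \<Rightarrow> (nat \<Rightarrow> real) \<Rightarrow> (nat \<Rightarrow> real) \<Rightarrow> real" where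
  "energy d eps p = (\<Sum>i<d. p i * eps i)"

definition entropy :: "nat \<Rightarrow> (nat \<Rightarrow> real) \<Rightarrow> real" where
  "entropy d p = - (\<Sum>i<d. p i * ln (p i))"

definition full_rank_passive :: "nat \<Rightarrow> (nat \<Rightarrow> real) \<Rightarrow> (nat \<Rightarrow> real) \<Rightarrow> bool" where
  "full_rank_passive d eps p \<longleftrightarrow>
     (\<forall>i<d. 0 < p i) \<and> (\<Sum>i<d. p i) = 1 \<and>
     (\<forall>i<d. \<forall>j<d. eps i < eps j \<longrightarrow> p j \<le> p i)"

definition gibbs :: "nat \<Rightarrow> (nat \<Rightarrow> real) \<Rightarrow> real \<Rightarrow> nat \<Rightarrow> real" where
  "gibbs d eps \<beta> i = exp (- \<beta> * eps i) / (\<Sum>j<d. exp (- \<beta> * eps j))"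

definition beta_max :: "nat \<Rightarrow> (nat \<Rightarrow> real) \<Rightarrow> real \<Rightarrow> real" where
  "beta_max d eps S = (THE \<beta>. 0 \<le> \<beta> \<and> entropy d (gibbs d eps \<beta>) = S)"

definition beta_min :: "nat \<Rightarrow> (nat \<Rightarrow> real) \<Rightarrow> real \<Rightarrow> real" where
  "beta_min d eps E = (THE \<beta>. 0 \<le> \<beta> \<and> energy d eps (gibbs d eps \<beta>) = E)"

definition W_max :: "nat \<Rightarrow> (nat \<Rightarrow> real) \<Rightarrow> real \<Rightarrow> real \<Rightarrow> real" where
  "W_max d eps E S = E - energy d eps (gibbs d eps (beta_max d eps S))"

definition Delta_S_max :: "nat \<Rightarrow> (nat \<Rightarrow> real) \<Rightarrow> real \<Rightarrow> real \<Rightarrow> real" where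
  "Delta_S_max d eps E S = entropy d (gibbs d eps (beta_min d eps E)) - S"

definition eps_s_ensemble :: "nat \<Rightarrow> (nat \<Rightarrow> real) \<Rightarrow> (nat \<Rightarrow> real) \<Rightarrow> (real \<times> real) set" where
  "eps_s_ensemble d eps p = (\<lambda>i. (eps i, - ln (p i))) ` {..<d}"

definition hull_area :: "nat \<Rightarrow> (nat \<Rightarrow> real) \<Rightarrow> (nat \<Rightarrow> real) \<Rightarrow> real" where
  "hull_area d eps p = measure lborel (convex hull (eps_s_ensemble d eps p))"

definition geom_athermality :: "nat \<Rightarrow> (nat \<Rightarrow> real) \<Rightarrow> real \<Rightarrow> real \<Rightarrow> real" where
  "geom_athermality d eps E S =
     Inf {hull_area d eps p | p. full_rank_passive d eps p \<and>
                                 energy d eps p = E \<and> entropy d p = S}"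

definition passive_region :: "nat \<Rightarrow> (nat \<Rightarrow> real) \<Rightarrow> (real \<times> real) set" where
  "passive_region d eps =
     {(energy d eps p, entropy d p) | p. full_rank_passive d eps p}"

definition activation_trajectory ::
  "nat \<Rightarrow> (nat \<Rightarrow> real) \<Rightarrow> real \<Rightarrow> real \<Rightarrow> (real \<Rightarrow> real) \<Rightarrow> (real \<Rightarrow> real) \<Rightarrow> bool" where
  "activation_trajectory d eps a b Ef Sf \<longleftrightarrow>
     a < b \<and>
     (\<forall>t\<in>{a..b}. (Ef t, Sf t) \<in> passive_region d eps) \<and>
     (\<forall>t\<in>{a..b}. \<exists>uE uS. (Ef has_real_derivative uE) (at t within {a..b}) \<and>
                          (Sf has_real_derivative uS) (at t within {a..b}) \<and>
                          uE \<le> 0 \<and> 0 \<le> uS)"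

end

theory Submission
  imports Defs "HOL-Real_Asymp.Real_Asymp"
begin

(* Along an activation trajectory E decreases and S increases, so it suffices that all three
   quantities are antitone for this order on the passive region.  For W_max and Delta_S_max this
   is the monotonicity of the Gibbs curve: energy and entropy of the Gibbs state strictly decrease
   in beta.  For the geometric athermality, a full-rank passive p can be carried to any point
   (E, S) with E <= E(p), S >= S(p) of the region by a tilt q_i ~ p_i^l exp (- m eps_i) with
   0 <= l <= 1, m >= 0.  The tilt keeps passivity and acts on the eps-s ensemble by the affine
   shear (x, y) |-> (x, l y + m x + c), which multiplies the hull area by l.  The parameters come
   from an intermediate value argument: for each l the m fixing the energy is unique and
   continuous in l, and the entropy along this curve is at least S at l = 0 (a Gibbs state has
   maximal entropy at its energy) and at most S(p) <= S at l = 1 (cooling lowers entropy). *)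

section \<open>Chebyshev's sum inequality for exponential weights\<close>

lemma exp_diff_mult_nonneg:
  fixes u v w :: real
  assumes "0 \<le> (u - v) * w"
  shows "0 \<le> (exp u - exp v) * w"
  using assms by (auto simp: zero_le_mult_iff)

lemma exp_diff_mult_pos:
  fixes u v w :: real
  assumes "0 < (u - v) * w"
  shows "0 < (exp u - exp v) * w"
  using assms by (auto simp: zero_less_mult_iff)

lemma sum_product_antisym_eq:
  fixes u v a :: "nat \<Rightarrow> 'a::comm_ring_1"
  shows "2 * ((\<Sum>i<d. v i * a i) * (\<Sum>j<d. u j) - (\<Sum>i<d. u i * a i) * (\<Sum>j<d. v j))
     = (\<Sum>i<d. \<Sum>j<d. (v i * u j - u i * v j) * (a i - a j))"
proof -
  have "(\<Sum>i<d. \<Sum>j<d. (v i * u j - u i * v j) * (a i - a j))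
      = (\<Sum>i<d. \<Sum>j<d. v i * a i * u j) + (\<Sum>i<d. \<Sum>j<d. u i * (v j * a j))
        - (\<Sum>i<d. \<Sum>j<d. u i * a i * v j) - (\<Sum>i<d. \<Sum>j<d. v i * (u j * a j))"
    unfolding sum_subtractf[symmetric] sum.distrib[symmetric] by (simp add: algebra_simps)
  also have "\<dots> = 2 * ((\<Sum>i<d. v i * a i) * (\<Sum>j<d. u j) - (\<Sum>i<d. u i * a i) * (\<Sum>j<d. v j))"
    unfolding sum_product[symmetric] by (simp add: algebra_simps)
  finally show ?thesis ..
qed

lemma exp_weighted_mean_diff_eq:
  fixes x y a :: "nat \<Rightarrow> real"
  assumes "0 < d"
  shows "(\<Sum>i<d. exp (y i) * a i) / (\<Sum>i<d. exp (y i)) - (\<Sum>i<d. exp (x i) * a i) / (\<Sum>i<d. exp (x i))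
    = (\<Sum>i<d. \<Sum>j<d. (exp (y i + x j) - exp (x i + y j)) * (a i - a j))
      / (2 * (\<Sum>i<d. exp (x i)) * (\<Sum>i<d. exp (y i)))"
proof -
  have "2 * ((\<Sum>i<d. exp (y i) * a i) * (\<Sum>j<d. exp (x j)) - (\<Sum>i<d. exp (x i) * a i) * (\<Sum>j<d. exp (y j)))
      = (\<Sum>i<d. \<Sum>j<d. (exp (y i + x j) - exp (x i + y j)) * (a i - a j))"
    unfolding exp_add by (rule sum_product_antisym_eq)
  moreover have "0 < (\<Sum>i<d. exp (x i))" "0 < (\<Sum>i<d. exp (y i))"
    using assms by (auto intro!: sum_pos)
  moreover have "A / Y - B / X = N / (2 * X * Y)"
    if "2 * (A * X - B * Y) = N" "0 < X" "0 < Y" for A B X Y N :: real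
    using that by (simp add: field_simps)
  ultimately show ?thesis by blast
qed

lemma exp_weighted_mean_le:
  fixes x y a :: "nat \<Rightarrow> real"
  assumes "\<And>i j. i < d \<Longrightarrow> j < d \<Longrightarrow> 0 \<le> ((y i - x i) - (y j - x j)) * (a i - a j)"
  shows "(\<Sum>i<d. exp (x i) * a i) / (\<Sum>i<d. exp (x i)) \<le> (\<Sum>i<d. exp (y i) * a i) / (\<Sum>i<d. exp (y i))"
proof (cases "d = 0")
  case False
  have "0 \<le> (\<Sum>i<d. \<Sum>j<d. (exp (y i + x j) - exp (x i + y j)) * (a i - a j))"
    using assms by (intro sum_nonneg exp_diff_mult_nonneg) (simp add: algebra_simps)
  moreover have "0 < (\<Sum>i<d. exp (x i))" "0 < (\<Sum>i<d. exp (y i))"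
    using False by (auto intro!: sum_pos)
  ultimately have "0 \<le> (\<Sum>i<d. \<Sum>j<d. (exp (y i + x j) - exp (x i + y j)) * (a i - a j))
      / (2 * (\<Sum>i<d. exp (x i)) * (\<Sum>i<d. exp (y i)))"
    by simp
  then show ?thesis
    using exp_weighted_mean_diff_eq[of d y a x] False by linarith
qed simp

lemma exp_weighted_mean_less:
  fixes x y a :: "nat \<Rightarrow> real"
  assumes "\<And>i j. i < d \<Longrightarrow> j < d \<Longrightarrow> 0 \<le> ((y i - x i) - (y j - x j)) * (a i - a j)"
    and "k < d" "l < d" "0 < ((y k - x k) - (y l - x l)) * (a k - a l)"
  shows "(\<Sum>i<d. exp (x i) * a i) / (\<Sum>i<d. exp (x i)) < (\<Sum>i<d. exp (y i) * a i) / (\<Sum>i<d. exp (y i))"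
proof -
  have term_nonneg: "0 \<le> (exp (y i + x j) - exp (x i + y j)) * (a i - a j)" if "i < d" "j < d" for i j
    using assms(1)[OF that] by (intro exp_diff_mult_nonneg) (simp add: algebra_simps)
  have "0 < (exp (y k + x l) - exp (x k + y l)) * (a k - a l)"
    using assms(4) by (intro exp_diff_mult_pos) (simp add: algebra_simps)
  then have row_pos: "0 < (\<Sum>j<d. (exp (y k + x j) - exp (x k + y j)) * (a k - a j))"
    by (intro sum_pos2[of _ l]) (use assms(2,3) term_nonneg in auto)
  have "0 < (\<Sum>i<d. \<Sum>j<d. (exp (y i + x j) - exp (x i + y j)) * (a i - a j))"
    by (rule sum_pos2[of _ k]) (use row_pos assms(2) term_nonneg in \<open>auto intro!: sum_nonneg\<close>)
  moreover have "0 < (\<Sum>i<d. exp (x i))" "0 < (\<Sum>i<d. exp (y i))"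
    using assms(2) by (auto intro!: sum_pos)
  ultimately have "0 < (\<Sum>i<d. \<Sum>j<d. (exp (y i + x j) - exp (x i + y j)) * (a i - a j))
      / (2 * (\<Sum>i<d. exp (x i)) * (\<Sum>i<d. exp (y i)))"
    by simp
  then show ?thesis
    using exp_weighted_mean_diff_eq[of d y a x] assms(2) by linarith
qed

section \<open>Gibbs' inequality\<close>

lemma mult_ln_ratio_le:
  fixes q r :: real
  assumes "0 < q" "0 < r"
  shows "q * ln r - q * ln q \<le> r - q"
proof -
  have "q * ln (r / q) \<le> q * (r / q - 1)"
    using assms by (intro mult_left_mono ln_le_minus_one) auto
  then show ?thesis using assms by (simp add: ln_div right_diff_distrib)
qed

lemma mult_ln_ratio_less:
  fixes q r :: real
  assumes "0 < q" "0 < r" "q \<noteq> r"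
  shows "q * ln r - q * ln q < r - q"
proof -
  have "ln (r / q) \<noteq> r / q - 1"
    using assms ln_eq_minus_one[of "r / q"] by auto
  then have "ln (r / q) < r / q - 1"
    using assms ln_le_minus_one[of "r / q"] by simp
  then have "q * ln (r / q) < q * (r / q - 1)"
    using assms by (intro mult_strict_left_mono) auto
  then show ?thesis using assms by (simp add: ln_div right_diff_distrib)
qed

lemma entropy_le_cross_entropy:
  assumes "\<And>i. i < d \<Longrightarrow> 0 < q i" "\<And>i. i < d \<Longrightarrow> 0 < r i" "(\<Sum>i<d. q i) = 1" "(\<Sum>i<d. r i) = 1"
  shows "entropy d q \<le> - (\<Sum>i<d. q i * ln (r i))"
proof -
  have "(\<Sum>i<d. q i * ln (r i) - q i * ln (q i)) \<le> (\<Sum>i<d. r i - q i)"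
    using assms by (intro sum_mono mult_ln_ratio_le) auto
  then show ?thesis using assms by (simp add: entropy_def sum_subtractf)
qed

lemma entropy_less_cross_entropy:
  assumes "\<And>i. i < d \<Longrightarrow> 0 < q i" "\<And>i. i < d \<Longrightarrow> 0 < r i" "(\<Sum>i<d. q i) = 1" "(\<Sum>i<d. r i) = 1"
    and "k < d" "q k \<noteq> r k"
  shows "entropy d q < - (\<Sum>i<d. q i * ln (r i))"
proof -
  have "(\<Sum>i<d. q i * ln (r i) - q i * ln (q i)) < (\<Sum>i<d. r i - q i)"
    using assms by (intro sum_strict_mono_ex1) (auto intro!: mult_ln_ratio_le mult_ln_ratio_less)
  then show ?thesis using assms by (simp add: entropy_def sum_subtractf)
qed

section \<open>Tilted states\<close>

definition tilt_partition :: "nat \<Rightarrow> (nat \<Rightarrow> real) \<Rightarrow> (nat \<Rightarrow> real) \<Rightarrow> real \<Rightarrow> real \<Rightarrow> real" where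
  "tilt_partition d eps p l m = (\<Sum>j<d. exp (l * ln (p j) - m * eps j))"

definition tilted :: "nat \<Rightarrow> (nat \<Rightarrow> real) \<Rightarrow> (nat \<Rightarrow> real) \<Rightarrow> real \<Rightarrow> real \<Rightarrow> nat \<Rightarrow> real" where
  "tilted d eps p l m i = exp (l * ln (p i) - m * eps i) / tilt_partition d eps p l m"

lemma tilt_partition_pos: "0 < d \<Longrightarrow> 0 < tilt_partition d eps p l m"
  unfolding tilt_partition_def by (intro sum_pos) auto

lemma tilted_pos: "0 < d \<Longrightarrow> 0 < tilted d eps p l m i"
  unfolding tilted_def using tilt_partition_pos by auto

lemma sum_tilted: "0 < d \<Longrightarrow> (\<Sum>i<d. tilted d eps p l m i) = 1"
  unfolding tilted_def using tilt_partition_pos[of d eps p l m]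
  by (simp add: sum_divide_distrib[symmetric] tilt_partition_def)

lemma ln_tilted:
  "0 < d \<Longrightarrow> ln (tilted d eps p l m i) = l * ln (p i) - m * eps i - ln (tilt_partition d eps p l m)"
  unfolding tilted_def using tilt_partition_pos[of d eps p l m] by (simp add: ln_div)

lemma energy_tilted:
  "energy d eps (tilted d eps p l m) =
     (\<Sum>i<d. exp (l * ln (p i) - m * eps i) * eps i) / (\<Sum>i<d. exp (l * ln (p i) - m * eps i))"
  unfolding energy_def tilted_def tilt_partition_def by (simp add: sum_divide_distrib[symmetric])

lemma sum_mult_affine:
  fixes q a e :: "nat \<Rightarrow> real"
  shows "(\<Sum>i<d. q i * (a i - m * e i - c)) = (\<Sum>i<d. q i * a i) - m * (\<Sum>i<d. q i * e i) - c * (\<Sum>i<d. q i)"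
  by (simp add: algebra_simps sum_subtractf sum_distrib_left sum.distrib)

lemma entropy_tilted:
  assumes "0 < d"
  shows "entropy d (tilted d eps p l m) = m * energy d eps (tilted d eps p l m)
     - l * (\<Sum>i<d. tilted d eps p l m i * ln (p i)) + ln (tilt_partition d eps p l m)"
  unfolding entropy_def energy_def ln_tilted[OF assms] sum_mult_affine[of _ "\<lambda>i. l * ln (p i)"]
  using sum_tilted[OF assms] by (simp add: sum_distrib_left mult_ac)

lemma tilted_one_zero:
  assumes "\<And>i. i < d \<Longrightarrow> 0 < p i" "(\<Sum>i<d. p i) = 1" "i < d"
  shows "tilted d eps p 1 0 i = p i"
  using assms by (simp add: tilted_def tilt_partition_def)

lemma gibbs_eq_tilted: "gibbs d eps \<beta> = tilted d eps p 0 \<beta>"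
  unfolding gibbs_def tilted_def tilt_partition_def by auto

lemma full_rank_passive_pos:
  assumes "full_rank_passive d eps p"
  shows "\<And>i. i < d \<Longrightarrow> 0 < p i" "(\<Sum>i<d. p i) = 1" "0 < d"
  using assms unfolding full_rank_passive_def by (auto intro: Nat.gr0I)

lemma full_rank_passive_tilted:
  assumes "full_rank_passive d eps p" "0 \<le> l" "0 \<le> m"
  shows "full_rank_passive d eps (tilted d eps p l m)"
proof -
  have d: "0 < d" using full_rank_passive_pos(3)[OF assms(1)] .
  have "tilted d eps p l m j \<le> tilted d eps p l m i" if "i < d" "j < d" "eps i < eps j" for i j
  proof -
    have "p j \<le> p i" "0 < p j" using assms(1) that unfolding full_rank_passive_def by auto
    then have "l * ln (p j) - m * eps j \<le> l * ln (p i) - m * eps i"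
      using assms(2,3) that by (intro diff_mono mult_left_mono) auto
    then show ?thesis unfolding tilted_def using tilt_partition_pos[OF d, of eps p l m]
      by (intro divide_right_mono) auto
  qed
  then show ?thesis unfolding full_rank_passive_def using tilted_pos[OF d] sum_tilted[OF d] by auto
qed

lemma energy_tilted_less:
  assumes "m1 < m2" "2 \<le> d" "nondegenerate d eps"
  shows "energy d eps (tilted d eps p l m2) < energy d eps (tilted d eps p l m1)"
  unfolding energy_tilted
proof (rule exp_weighted_mean_less[where k = 0 and l = 1])
  have shift: "(l * ln (p i) - m1 * eps i - (l * ln (p i) - m2 * eps i)
      - (l * ln (p j) - m1 * eps j - (l * ln (p j) - m2 * eps j))) * (eps i - eps j)
    = (m2 - m1) * (eps i - eps j)\<^sup>2" for i j
    by (simp add: algebra_simps power2_eq_square)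
  have "eps 0 \<noteq> eps 1"
    using assms(2,3) unfolding nondegenerate_def inj_on_def by fastforce
  then show "0 < (l * ln (p 0) - m1 * eps 0 - (l * ln (p 0) - m2 * eps 0)
      - (l * ln (p 1) - m1 * eps 1 - (l * ln (p 1) - m2 * eps 1))) * (eps 0 - eps 1)"
    unfolding shift using assms(1) by simp
  show "0 \<le> (l * ln (p i) - m1 * eps i - (l * ln (p i) - m2 * eps i)
      - (l * ln (p j) - m1 * eps j - (l * ln (p j) - m2 * eps j))) * (eps i - eps j)" for i j
    unfolding shift using assms(1) by simp
qed (use assms(2) in auto)

lemma passive_ln_eps_antiordered:
  assumes "full_rank_passive d eps p" "i < d" "j < d"
  shows "(ln (p i) - ln (p j)) * (eps i - eps j) \<le> 0"
proof -
  have p: "0 < p i" "0 < p j" using assms unfolding full_rank_passive_def by auto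
  consider "eps i < eps j" | "eps i = eps j" | "eps j < eps i" by linarith
  then show ?thesis
  proof cases
    case 1
    then have "ln (p j) \<le> ln (p i)" using assms p unfolding full_rank_passive_def by auto
    then show ?thesis using 1 by (simp add: mult_nonneg_nonpos)
  next
    case 3
    then have "ln (p i) \<le> ln (p j)" using assms p unfolding full_rank_passive_def by auto
    then show ?thesis using 3 by (simp add: mult_nonpos_nonneg)
  qed simp
qed

lemma energy_tilted_antimono_l:
  assumes "full_rank_passive d eps p" "l1 \<le> l2"
  shows "energy d eps (tilted d eps p l2 m) \<le> energy d eps (tilted d eps p l1 m)"
  unfolding energy_tilted
proof (rule exp_weighted_mean_le)
  fix i j assume ij: "i < d" "j < d"
  have shift: "(l1 * ln (p i) - m * eps i - (l2 * ln (p i) - m * eps i)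
      - (l1 * ln (p j) - m * eps j - (l2 * ln (p j) - m * eps j))) * (eps i - eps j)
    = (l1 - l2) * ((ln (p i) - ln (p j)) * (eps i - eps j))"
    by (simp add: algebra_simps)
  show "0 \<le> (l1 * ln (p i) - m * eps i - (l2 * ln (p i) - m * eps i)
      - (l1 * ln (p j) - m * eps j - (l2 * ln (p j) - m * eps j))) * (eps i - eps j)"
    unfolding shift using passive_ln_eps_antiordered[OF assms(1) ij] assms(2)
    by (intro mult_nonpos_nonpos) auto
qed

(* Tilting towards low energies favours the large p_i, hence the small values of - ln p_i. *)
lemma cross_entropy_tilted_le_entropy:
  assumes "full_rank_passive d eps p" "0 \<le> m"
  shows "- (\<Sum>i<d. tilted d eps p 1 m i * ln (p i)) \<le> entropy d p"
proof -
  note p = full_rank_passive_pos[OF assms(1)]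
  have "(\<Sum>i<d. exp (1 * ln (p i) - m * eps i) * - ln (p i)) / (\<Sum>i<d. exp (1 * ln (p i) - m * eps i))
     \<le> (\<Sum>i<d. exp (1 * ln (p i) - 0 * eps i) * - ln (p i)) / (\<Sum>i<d. exp (1 * ln (p i) - 0 * eps i))"
  proof (rule exp_weighted_mean_le)
    fix i j assume ij: "i < d" "j < d"
    have shift: "(1 * ln (p i) - 0 * eps i - (1 * ln (p i) - m * eps i)
        - (1 * ln (p j) - 0 * eps j - (1 * ln (p j) - m * eps j))) * (- ln (p i) - - ln (p j))
      = - m * ((ln (p i) - ln (p j)) * (eps i - eps j))"
      by (simp add: algebra_simps)
    show "0 \<le> (1 * ln (p i) - 0 * eps i - (1 * ln (p i) - m * eps i)
        - (1 * ln (p j) - 0 * eps j - (1 * ln (p j) - m * eps j))) * (- ln (p i) - - ln (p j))"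
      unfolding shift using passive_ln_eps_antiordered[OF assms(1) ij] assms(2)
      by (intro mult_nonpos_nonpos) auto
  qed
  also have "\<dots> = entropy d p"
    using p by (simp add: entropy_def sum_negf)
  finally show ?thesis
    unfolding tilted_def tilt_partition_def by (simp add: sum_divide_distrib[symmetric] sum_negf)
qed

lemma entropy_tilted_one_le:
  assumes "full_rank_passive d eps p" "0 \<le> m"
  shows "entropy d (tilted d eps p 1 m) \<le> entropy d p"
proof -
  note p = full_rank_passive_pos[OF assms(1)]
  have "entropy d (tilted d eps p 1 m) \<le> - (\<Sum>i<d. tilted d eps p 1 m i * ln (p i))"
    using p tilted_pos sum_tilted by (intro entropy_le_cross_entropy) auto
  also have "\<dots> \<le> entropy d p" by (rule cross_entropy_tilted_le_entropy[OF assms])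
  finally show ?thesis .
qed

lemma gibbs_pos: "0 < d \<Longrightarrow> 0 < gibbs d eps \<beta> i"
  unfolding gibbs_eq_tilted[of _ _ _ "\<lambda>_. 1"] by (rule tilted_pos)

lemma sum_gibbs: "0 < d \<Longrightarrow> (\<Sum>i<d. gibbs d eps \<beta> i) = 1"
  unfolding gibbs_eq_tilted[of _ _ _ "\<lambda>_. 1"] by (rule sum_tilted)

lemma cross_entropy_gibbs:
  assumes "0 < d" "(\<Sum>i<d. q i) = 1"
  shows "- (\<Sum>i<d. q i * ln (gibbs d eps \<beta> i)) = \<beta> * energy d eps q + ln (\<Sum>j<d. exp (- \<beta> * eps j))"
proof -
  have "0 < (\<Sum>j<d. exp (- \<beta> * eps j))"
    using assms(1) by (intro sum_pos) auto
  then have ln_gibbs: "ln (gibbs d eps \<beta> i) = - \<beta> * eps i - ln (\<Sum>j<d. exp (- \<beta> * eps j))" for i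
    unfolding gibbs_def by (simp add: ln_div)
  have "- (\<Sum>i<d. q i * (- \<beta> * eps i - L)) = \<beta> * (\<Sum>i<d. q i * eps i) + L * (\<Sum>i<d. q i)" for L
    by (simp add: ring_distribs sum_subtractf sum_negf sum_distrib_left mult_ac)
  then show ?thesis unfolding ln_gibbs energy_def using assms(2) by simp
qed

lemma entropy_le_gibbs_bound:
  assumes "\<And>i. i < d \<Longrightarrow> 0 < r i" "(\<Sum>i<d. r i) = 1"
  shows "entropy d r \<le> \<beta> * energy d eps r + ln (\<Sum>j<d. exp (- \<beta> * eps j))"
proof -
  have d: "0 < d" using assms(2) by (cases d) auto
  have "entropy d r \<le> - (\<Sum>i<d. r i * ln (gibbs d eps \<beta> i))"
    using assms gibbs_pos[OF d] sum_gibbs[OF d] by (intro entropy_le_cross_entropy) auto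
  also have "\<dots> = \<beta> * energy d eps r + ln (\<Sum>j<d. exp (- \<beta> * eps j))"
    using cross_entropy_gibbs[OF d assms(2)] .
  finally show ?thesis .
qed

lemma entropy_gibbs:
  "0 < d \<Longrightarrow> entropy d (gibbs d eps \<beta>) = \<beta> * energy d eps (gibbs d eps \<beta>) + ln (\<Sum>j<d. exp (- \<beta> * eps j))"
  using entropy_tilted[of d eps "\<lambda>_. 1" 0 \<beta>]
  by (simp add: gibbs_eq_tilted[of _ _ _ "\<lambda>_. 1"] tilt_partition_def)

lemma entropy_le_entropy_gibbs:
  assumes "\<And>i. i < d \<Longrightarrow> 0 < r i" "(\<Sum>i<d. r i) = 1"
    and "energy d eps r = energy d eps (gibbs d eps \<beta>)"
  shows "entropy d r \<le> entropy d (gibbs d eps \<beta>)"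
proof -
  have "0 < d" using assms(2) by (cases d) auto
  then show ?thesis
    using entropy_le_gibbs_bound[OF assms(1,2), of \<beta> eps] assms(3) entropy_gibbs by simp
qed

lemma energy_gibbs_less:
  assumes "\<beta>1 < \<beta>2" "2 \<le> d" "nondegenerate d eps"
  shows "energy d eps (gibbs d eps \<beta>2) < energy d eps (gibbs d eps \<beta>1)"
  unfolding gibbs_eq_tilted[of _ _ _ "\<lambda>_. 1"] using energy_tilted_less[OF assms] .

lemma entropy_gibbs_less:
  assumes "0 \<le> \<beta>1" "\<beta>1 < \<beta>2" "2 \<le> d" "nondegenerate d eps"
  shows "entropy d (gibbs d eps \<beta>2) < entropy d (gibbs d eps \<beta>1)"
proof -
  have d: "0 < d" using assms by auto
  have energy_less: "energy d eps (gibbs d eps \<beta>2) < energy d eps (gibbs d eps \<beta>1)"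
    using energy_gibbs_less[OF assms(2-4)] .
  then obtain k where k: "k < d" "gibbs d eps \<beta>2 k \<noteq> gibbs d eps \<beta>1 k"
    unfolding energy_def by (metis (no_types, lifting) lessThan_iff less_irrefl sum.cong)
  have "entropy d (gibbs d eps \<beta>2) < - (\<Sum>i<d. gibbs d eps \<beta>2 i * ln (gibbs d eps \<beta>1 i))"
    using gibbs_pos[OF d] sum_gibbs[OF d] k by (intro entropy_less_cross_entropy) auto
  also have "\<dots> = \<beta>1 * energy d eps (gibbs d eps \<beta>2) + ln (\<Sum>j<d. exp (- \<beta>1 * eps j))"
    using cross_entropy_gibbs[OF d sum_gibbs[OF d]] .
  also have "\<dots> \<le> \<beta>1 * energy d eps (gibbs d eps \<beta>1) + ln (\<Sum>j<d. exp (- \<beta>1 * eps j))"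
    using energy_less assms(1) by (simp add: mult_left_mono)
  also have "\<dots> = entropy d (gibbs d eps \<beta>1)"
    using entropy_gibbs[OF d] by simp
  finally show ?thesis .
qed

section \<open>Limits at low temperature\<close>

lemma energy_tilted_minus_ground_le:
  assumes "i0 < d" "\<And>j. j < d \<Longrightarrow> eps i0 \<le> eps j"
  shows "energy d eps (tilted d eps p l M) - eps i0
    \<le> (\<Sum>j<d. exp (l * ln (p j) - l * ln (p i0) - M * (eps j - eps i0)) * (eps j - eps i0))"
proof -
  have d: "0 < d" using assms(1) by simp
  let ?Z = "tilt_partition d eps p l M"
  have Z_ge: "exp (l * ln (p i0) - M * eps i0) \<le> ?Z"
    unfolding tilt_partition_def using assms(1) by (intro member_le_sum) auto
  have "energy d eps (tilted d eps p l M) - eps i0 = (\<Sum>j<d. tilted d eps p l M j * (eps j - eps i0))"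
    using sum_tilted[OF d, of eps p l M] unfolding energy_def
    by (simp add: right_diff_distrib sum_subtractf flip: sum_distrib_right)
  also have "\<dots> \<le> (\<Sum>j<d. exp (l * ln (p j) - l * ln (p i0) - M * (eps j - eps i0)) * (eps j - eps i0))"
  proof (intro sum_mono mult_right_mono)
    fix j assume j: "j \<in> {..<d}"
    have "tilted d eps p l M j \<le> exp (l * ln (p j) - M * eps j) / exp (l * ln (p i0) - M * eps i0)"
      unfolding tilted_def using Z_ge tilt_partition_pos[OF d] by (intro divide_left_mono) auto
    also have "\<dots> = exp (l * ln (p j) - l * ln (p i0) - M * (eps j - eps i0))"
      by (simp add: algebra_simps flip: exp_diff)
    finally show "tilted d eps p l M j \<le> exp (l * ln (p j) - l * ln (p i0) - M * (eps j - eps i0))" .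
    show "0 \<le> eps j - eps i0" using assms(2) j by simp
  qed
  finally show ?thesis .
qed

lemma eventually_energy_tilted_less:
  assumes "i0 < d" "\<And>j. j < d \<Longrightarrow> eps i0 \<le> eps j" "eps i0 < E'"
  shows "eventually (\<lambda>M. energy d eps (tilted d eps p l M) < E') at_top"
proof -
  let ?h = "\<lambda>M. \<Sum>j<d. exp (l * ln (p j) - l * ln (p i0) - M * (eps j - eps i0)) * (eps j - eps i0)"
  have "((\<lambda>M. exp (c - M * \<delta>) * \<delta>) \<longlongrightarrow> 0) at_top" if "0 \<le> \<delta>" for c \<delta> :: real
    using that by (cases "\<delta> = 0") (simp, real_asymp)
  then have "(?h \<longlongrightarrow> 0) at_top"
    using assms(2) by (intro tendsto_null_sum) auto
  then have "eventually (\<lambda>M. ?h M < E' - eps i0) at_top"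
    using assms(3) by (intro order_tendstoD) auto
  then show ?thesis
  proof eventually_elim
    case (elim M)
    then show ?case
      using energy_tilted_minus_ground_le[of i0 d eps, OF assms(1,2), where p = p and l = l and M = M]
      by linarith
  qed
qed

lemma entropy_gibbs_le_ground_bound:
  assumes "i0 < d" "\<And>j. j < d \<Longrightarrow> eps i0 \<le> eps j" "0 \<le> \<beta>"
  shows "entropy d (gibbs d eps \<beta>)
    \<le> (\<Sum>j<d. \<beta> * (exp (- (\<beta> * (eps j - eps i0))) * (eps j - eps i0)))
      + (\<Sum>j\<in>{..<d} - {i0}. exp (- (\<beta> * (eps j - eps i0))))"
proof -
  have d: "0 < d" using assms(1) by simp
  let ?Z = "\<Sum>j<d. exp (- \<beta> * eps j)"
  have "energy d eps (gibbs d eps \<beta>) - eps i0 \<le> (\<Sum>j<d. exp (- (\<beta> * (eps j - eps i0))) * (eps j - eps i0))"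
    using energy_tilted_minus_ground_le[of i0 d eps "\<lambda>_. 1" 0 \<beta>] assms(1,2)
    by (simp add: gibbs_eq_tilted[of _ _ _ "\<lambda>_. 1"])
  then have energy_part: "\<beta> * (energy d eps (gibbs d eps \<beta>) - eps i0)
      \<le> (\<Sum>j<d. \<beta> * (exp (- (\<beta> * (eps j - eps i0))) * (eps j - eps i0)))"
    using assms(3) by (simp add: mult_left_mono flip: sum_distrib_left)
  have Z_pos: "0 < ?Z" using d by (intro sum_pos) auto
  have "?Z * exp (\<beta> * eps i0) = (\<Sum>j<d. exp (- (\<beta> * (eps j - eps i0))))"
    unfolding sum_distrib_right by (intro sum.cong) (simp_all add: algebra_simps flip: exp_add)
  also have "\<dots> = 1 + (\<Sum>j\<in>{..<d} - {i0}. exp (- (\<beta> * (eps j - eps i0))))"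
    using assms(1) by (subst sum.remove[of _ i0]) auto
  finally have Z_shifted: "?Z * exp (\<beta> * eps i0) = 1 + (\<Sum>j\<in>{..<d} - {i0}. exp (- (\<beta> * (eps j - eps i0))))" .
  have "ln ?Z + \<beta> * eps i0 = ln (?Z * exp (\<beta> * eps i0))"
    using Z_pos by (simp add: ln_mult)
  also have "\<dots> \<le> ?Z * exp (\<beta> * eps i0) - 1"
    using Z_pos by (intro ln_le_minus_one) simp
  finally have "ln ?Z + \<beta> * eps i0 \<le> (\<Sum>j\<in>{..<d} - {i0}. exp (- (\<beta> * (eps j - eps i0))))"
    unfolding Z_shifted by simp
  with energy_part show ?thesis
    unfolding entropy_gibbs[OF d] by (simp add: algebra_simps)
qed

lemma eventually_entropy_gibbs_less:
  assumes "i0 < d" "\<And>j. j < d \<Longrightarrow> j \<noteq> i0 \<Longrightarrow> eps i0 < eps j" "0 < S"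
  shows "eventually (\<lambda>\<beta>. entropy d (gibbs d eps \<beta>) < S) at_top"
proof -
  have ground: "eps i0 \<le> eps j" if "j < d" for j
    using assms(2)[OF that] by (cases "j = i0") (auto simp: less_imp_le)
  define B where "B \<beta> = (\<Sum>j<d. \<beta> * (exp (- (\<beta> * (eps j - eps i0))) * (eps j - eps i0)))
      + (\<Sum>j\<in>{..<d} - {i0}. exp (- (\<beta> * (eps j - eps i0))))" for \<beta>
  have "((\<lambda>\<beta>. \<beta> * (exp (- (\<beta> * \<delta>)) * \<delta>)) \<longlongrightarrow> 0) at_top" if "0 \<le> \<delta>" for \<delta> :: real
    using that by (cases "\<delta> = 0") (simp, real_asymp)
  moreover have "((\<lambda>\<beta>. exp (- (\<beta> * (eps j - eps i0)))) \<longlongrightarrow> 0) at_top" if "j \<in> {..<d} - {i0}" for j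
  proof -
    have "0 < eps j - eps i0" using assms(2) that by auto
    then show ?thesis by real_asymp
  qed
  ultimately have "(B \<longlongrightarrow> 0 + 0) at_top"
    unfolding B_def using ground by (intro tendsto_add tendsto_null_sum) auto
  then have "eventually (\<lambda>\<beta>. B \<beta> < S) at_top"
    using assms(3) by (intro order_tendstoD) auto
  moreover have "eventually (\<lambda>\<beta>::real. 0 \<le> \<beta>) at_top"
    by (rule eventually_ge_at_top)
  ultimately show ?thesis
  proof eventually_elim
    case (elim \<beta>)
    then show ?case
      using entropy_gibbs_le_ground_bound[of i0 d eps, OF assms(1) ground, of \<beta>] unfolding B_def by simp
  qed
qed

lemma continuous_on_energy_tilted:
  assumes "continuous_on T L" "continuous_on T M"
  shows "continuous_on T (\<lambda>t. energy d eps (tilted d eps p (L t) (M t)))"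
proof (cases "d = 0")
  case False
  then have "0 < (\<Sum>i<d. exp (L t * ln (p i) - M t * eps i))" for t
    by (intro sum_pos) auto
  then have "(\<Sum>i<d. exp (L t * ln (p i) - M t * eps i)) \<noteq> 0" for t
    by (metis less_irrefl)
  then show ?thesis unfolding energy_tilted using assms by (intro continuous_intros) auto
qed (simp add: energy_def)

lemma continuous_on_entropy_tilted:
  assumes "continuous_on T L" "continuous_on T M" "0 < d"
  shows "continuous_on T (\<lambda>t. entropy d (tilted d eps p (L t) (M t)))"
proof -
  have Z_cont: "continuous_on T (\<lambda>t. tilt_partition d eps p (L t) (M t))"
    unfolding tilt_partition_def using assms by (intro continuous_intros)
  have Z_nonzero: "tilt_partition d eps p (L t) (M t) \<noteq> 0" for t
    using tilt_partition_pos[OF assms(3)] by (metis less_irrefl)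
  have "continuous_on T (\<lambda>t. tilted d eps p (L t) (M t) i)" for i
    unfolding tilted_def using assms Z_cont Z_nonzero by (intro continuous_intros) auto
  then show ?thesis
    unfolding entropy_tilted[OF assms(3)] using assms Z_cont Z_nonzero continuous_on_energy_tilted[OF assms(1,2)]
    by (intro continuous_intros) auto
qed

lemma continuous_on_implicit_root:
  fixes f :: "real \<Rightarrow> real \<Rightarrow> real" and g :: "real \<Rightarrow> real"
  assumes root: "\<And>x. x \<in> I \<Longrightarrow> f x (g x) = c"
    and antimono: "\<And>x m m'. x \<in> I \<Longrightarrow> m < m' \<Longrightarrow> f x m' < f x m"
    and cont: "\<And>m. continuous_on I (\<lambda>x. f x m)"
  shows "continuous_on I g"
  unfolding continuous_on_def
proof (intro ballI tendstoI)
  fix x e :: real assume x: "x \<in> I" and e: "0 < e"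
  have "c < f x (g x - e)" "f x (g x + e) < c"
    using antimono[OF x, of "g x - e" "g x"] antimono[OF x, of "g x" "g x + e"] root[OF x] e by auto
  moreover have lim: "((\<lambda>y. f y m) \<longlongrightarrow> f x m) (at x within I)" for m
    using cont x unfolding continuous_on_def by blast
  ultimately have "eventually (\<lambda>y. c < f y (g x - e)) (at x within I)"
    "eventually (\<lambda>y. f y (g x + e) < c) (at x within I)"
    by (auto intro: order_tendstoD[OF lim])
  moreover have "eventually (\<lambda>y. y \<in> I) (at x within I)"
    by (simp add: eventually_at_filter)
  ultimately show "eventually (\<lambda>y. dist (g y) (g x) < e) (at x within I)"
  proof eventually_elim
    case (elim y)
    have "g x - e < g y"
    proof (rule ccontr)
      assume "\<not> g x - e < g y"
      then have "f y (g x - e) \<le> f y (g y)"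
        using antimono[of y "g y" "g x - e"] elim by (cases "g y = g x - e") auto
      then show False using elim root by simp
    qed
    moreover have "g y < g x + e"
    proof (rule ccontr)
      assume "\<not> g y < g x + e"
      then have "f y (g y) \<le> f y (g x + e)"
        using antimono[of y "g x + e" "g y"] elim by (cases "g y = g x + e") auto
      then show False using elim root by simp
    qed
    ultimately show ?case by (simp add: dist_real_def abs_less_iff)
  qed
qed

lemma the_nonneg_root_eq:
  fixes f :: "real \<Rightarrow> real"
  assumes "\<And>x y. 0 \<le> x \<Longrightarrow> x < y \<Longrightarrow> f y < f x" "0 \<le> b" "f b = c"
  shows "(THE \<beta>. 0 \<le> \<beta> \<and> f \<beta> = c) = b"
proof (rule the_equality)
  fix \<beta> assume "0 \<le> \<beta> \<and> f \<beta> = c"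
  then show "\<beta> = b"
    using assms(1)[of \<beta> b] assms(1)[of b \<beta>] assms(2,3) by (cases \<beta> b rule: linorder_cases) auto
qed (use assms in auto)

lemma nondegenerate_ground_state:
  assumes "0 < d" "nondegenerate d eps"
  obtains i0 where "i0 < d" "\<And>j. j < d \<Longrightarrow> eps i0 \<le> eps j" "\<And>j. j < d \<Longrightarrow> j \<noteq> i0 \<Longrightarrow> eps i0 < eps j"
proof -
  have "Min (eps ` {..<d}) \<in> eps ` {..<d}"
    using assms(1) by (intro Min_in) auto
  then obtain i0 where i0: "i0 < d" "eps i0 = Min (eps ` {..<d})" by auto
  then have "eps i0 \<le> eps j" if "j < d" for j
    using that by simp
  moreover have "eps i0 \<noteq> eps j" if "j < d" "j \<noteq> i0" for j
    using assms(2) i0(1) that unfolding nondegenerate_def inj_on_def by auto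
  ultimately show ?thesis
    using i0(1) that by (meson order_le_neq_trans)
qed

lemma exists_other_index:
  fixes d i :: nat
  assumes "2 \<le> d" "i < d"
  obtains j where "j < d" "j \<noteq> i"
proof (cases "i = 0")
  case True
  then show ?thesis using assms that[of 1] by auto
next
  case False
  then show ?thesis using assms that[of 0] by auto
qed

lemma ground_energy_less_energy:
  assumes "full_rank_passive d eps r" "2 \<le> d" "i0 < d" "\<And>j. j < d \<Longrightarrow> j \<noteq> i0 \<Longrightarrow> eps i0 < eps j"
  shows "eps i0 < energy d eps r"
proof -
  note r = full_rank_passive_pos[OF assms(1)]
  obtain j where j: "j < d" "j \<noteq> i0" using exists_other_index[OF assms(2,3)] .
  have "0 < (\<Sum>k<d. r k * (eps k - eps i0))"
  proof (rule sum_pos2[of _ j])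
    show "0 < r j * (eps j - eps i0)" using r j assms(4) by simp
    show "0 \<le> r k * (eps k - eps i0)" if "k \<in> {..<d}" for k
      using less_imp_le[OF r(1)] assms(4)[of k] that by (cases "k = i0") (auto intro!: mult_nonneg_nonneg)
  qed (use j in auto)
  also have "\<dots> = energy d eps r - eps i0"
    using r unfolding energy_def by (simp add: right_diff_distrib sum_subtractf mult.commute flip: sum_distrib_left)
  finally show ?thesis by simp
qed

lemma entropy_pos:
  assumes "\<And>i. i < d \<Longrightarrow> 0 < r i" "(\<Sum>i<d. r i) = 1" "2 \<le> d"
  shows "0 < entropy d r"
proof -
  have "r i < 1" if i: "i < d" for i
  proof -
    obtain j where j: "j < d" "j \<noteq> i" using exists_other_index[OF assms(3) i] .
    have "r i + r j \<le> (\<Sum>k<d. r k)"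
      using i j assms(1) sum_mono2[of "{..<d}" "{i, j}" r] by (auto simp: less_imp_le)
    then show ?thesis using assms(1)[OF j(1)] assms(2) by simp
  qed
  then have "0 < - (r i * ln (r i))" if "i < d" for i
    using assms(1) that by (simp add: mult_pos_neg)
  then have "0 < (\<Sum>i<d. - (r i * ln (r i)))"
    using assms(3) by (intro sum_pos) (auto simp: lessThan_empty_iff)
  then show ?thesis unfolding entropy_def by (simp add: sum_negf)
qed

lemma exists_tilt_with_energy:
  assumes p: "full_rank_passive d eps p"
    and ground: "i0 < d" "\<And>j. j < d \<Longrightarrow> eps i0 \<le> eps j" "eps i0 < E'"
    and "E' \<le> energy d eps p" "0 \<le> l" "l \<le> 1"
  shows "\<exists>m\<ge>0. energy d eps (tilted d eps p l m) = E'"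
proof -
  note pos = full_rank_passive_pos[OF p]
  have "eventually (\<lambda>M. 0 \<le> M \<and> energy d eps (tilted d eps p l M) < E') at_top"
    using eventually_ge_at_top eventually_energy_tilted_less[of i0 d eps, OF ground]
    by (rule eventually_conj)
  then obtain M where M: "0 \<le> M" "energy d eps (tilted d eps p l M) < E'"
    using eventually_happens'[OF trivial_limit_at_top_linorder] by blast
  have "E' \<le> energy d eps (tilted d eps p 1 0)"
    using assms(5) tilted_one_zero[OF pos(1,2)] by (simp add: energy_def)
  also have "\<dots> \<le> energy d eps (tilted d eps p l 0)"
    using energy_tilted_antimono_l[OF p assms(7)] .
  finally have "E' \<le> energy d eps (tilted d eps p l 0)" .
  then obtain m where "0 \<le> m" "m \<le> M" "energy d eps (tilted d eps p l m) = E'"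
    using IVT2'[of "\<lambda>m. energy d eps (tilted d eps p l m)" M E' 0] M
      continuous_on_energy_tilted[of _ "\<lambda>_. l" "\<lambda>m. m"]
    by auto
  then show ?thesis by auto
qed

lemma beta_min_energy:
  assumes r: "full_rank_passive d eps r" and d: "2 \<le> d" and nd: "nondegenerate d eps"
  shows "0 \<le> beta_min d eps (energy d eps r)"
    "energy d eps (gibbs d eps (beta_min d eps (energy d eps r))) = energy d eps r"
proof -
  obtain i0 where ground: "i0 < d" "\<And>j. j < d \<Longrightarrow> eps i0 \<le> eps j" "\<And>j. j < d \<Longrightarrow> j \<noteq> i0 \<Longrightarrow> eps i0 < eps j"
    using nondegenerate_ground_state[OF _ nd] d by auto
  obtain \<beta> where \<beta>: "0 \<le> \<beta>" "energy d eps (gibbs d eps \<beta>) = energy d eps r"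
    using exists_tilt_with_energy[OF r ground(1,2) ground_energy_less_energy[OF r d ground(1,3)] order_refl, of 0]
    by (auto simp: gibbs_eq_tilted[of _ _ _ r])
  have "beta_min d eps (energy d eps r) = \<beta>"
    unfolding beta_min_def using energy_gibbs_less[OF _ d nd] \<beta> by (intro the_nonneg_root_eq) auto
  then show "0 \<le> beta_min d eps (energy d eps r)"
    "energy d eps (gibbs d eps (beta_min d eps (energy d eps r))) = energy d eps r"
    using \<beta> by simp_all
qed

lemma beta_max_entropy:
  assumes r: "full_rank_passive d eps r" and d: "2 \<le> d" and nd: "nondegenerate d eps"
  shows "0 \<le> beta_max d eps (entropy d r)"
    "entropy d (gibbs d eps (beta_max d eps (entropy d r))) = entropy d r"
proof -
  note pos = full_rank_passive_pos[OF r]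
  obtain i0 where ground: "i0 < d" "\<And>j. j < d \<Longrightarrow> eps i0 \<le> eps j" "\<And>j. j < d \<Longrightarrow> j \<noteq> i0 \<Longrightarrow> eps i0 < eps j"
    using nondegenerate_ground_state[OF _ nd] d by auto
  have "eventually (\<lambda>\<beta>. 0 \<le> \<beta> \<and> entropy d (gibbs d eps \<beta>) < entropy d r) at_top"
    using eventually_ge_at_top eventually_entropy_gibbs_less[of i0 d eps, OF ground(1,3) entropy_pos[OF pos(1,2) d]]
    by (rule eventually_conj)
  then obtain B where B: "0 \<le> B" "entropy d (gibbs d eps B) < entropy d r"
    using eventually_happens'[OF trivial_limit_at_top_linorder] by blast
  have "entropy d r \<le> entropy d (gibbs d eps 0)"
    using entropy_le_gibbs_bound[OF pos(1,2), of 0 eps] entropy_gibbs[OF pos(3), of eps 0] by simp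
  moreover have "continuous_on {0..B} (\<lambda>\<beta>. entropy d (gibbs d eps \<beta>))"
    using continuous_on_entropy_tilted[of _ "\<lambda>_. 0" "\<lambda>\<beta>. \<beta>", OF _ _ pos(3)]
    by (simp add: gibbs_eq_tilted[of _ _ _ r])
  ultimately obtain \<beta> where \<beta>: "0 \<le> \<beta>" "entropy d (gibbs d eps \<beta>) = entropy d r"
    using IVT2'[of "\<lambda>\<beta>. entropy d (gibbs d eps \<beta>)" B "entropy d r" 0] B by auto
  have "beta_max d eps (entropy d r) = \<beta>"
    unfolding beta_max_def using entropy_gibbs_less[OF _ _ d nd] \<beta> by (intro the_nonneg_root_eq) auto
  then show "0 \<le> beta_max d eps (entropy d r)"
    "entropy d (gibbs d eps (beta_max d eps (entropy d r))) = entropy d r"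
    using \<beta> by simp_all
qed

lemma exists_tilt_to_passive_point:
  assumes p: "full_rank_passive d eps p" and r: "full_rank_passive d eps r"
    and d: "2 \<le> d" and nd: "nondegenerate d eps"
    and "energy d eps r \<le> energy d eps p" "entropy d p \<le> entropy d r"
  obtains l m where "0 \<le> l" "l \<le> 1" "0 \<le> m"
    "energy d eps (tilted d eps p l m) = energy d eps r" "entropy d (tilted d eps p l m) = entropy d r"
proof -
  note pos = full_rank_passive_pos[OF r]
  obtain i0 where ground: "i0 < d" "\<And>j. j < d \<Longrightarrow> eps i0 \<le> eps j" "\<And>j. j < d \<Longrightarrow> j \<noteq> i0 \<Longrightarrow> eps i0 < eps j"
    using nondegenerate_ground_state[OF _ nd] d by auto
  have "\<forall>l\<in>{0..1}. \<exists>m\<ge>0. energy d eps (tilted d eps p l m) = energy d eps r"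
    using exists_tilt_with_energy[OF p ground(1,2) ground_energy_less_energy[OF r d ground(1,3)] assms(5)]
    by auto
  then obtain \<mu> where \<mu>: "\<And>l. l \<in> {0..1} \<Longrightarrow> 0 \<le> \<mu> l \<and> energy d eps (tilted d eps p l (\<mu> l)) = energy d eps r"
    by metis
  have "continuous_on {0..1} \<mu>"
    by (rule continuous_on_implicit_root[where f = "\<lambda>l m. energy d eps (tilted d eps p l m)"])
      (use \<mu> energy_tilted_less[OF _ d nd] continuous_on_energy_tilted[of _ "\<lambda>l. l"] in auto)
  then have "continuous_on {0..1} (\<lambda>l. entropy d (tilted d eps p l (\<mu> l)))"
    using pos(3) by (intro continuous_on_entropy_tilted continuous_on_id)
  moreover have "entropy d (tilted d eps p 1 (\<mu> 1)) \<le> entropy d r"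
    using entropy_tilted_one_le[OF p] \<mu>[of 1] assms(6) by fastforce
  moreover have "entropy d r \<le> entropy d (tilted d eps p 0 (\<mu> 0))"
    using entropy_le_entropy_gibbs[OF pos(1,2)] \<mu>[of 0] by (simp add: gibbs_eq_tilted[of _ _ _ p])
  ultimately obtain l where "0 \<le> l" "l \<le> 1" "entropy d (tilted d eps p l (\<mu> l)) = entropy d r"
    using IVT2'[of "\<lambda>l. entropy d (tilted d eps p l (\<mu> l))" 1 "entropy d r" 0] by auto
  then show ?thesis
    using that \<mu>[of l] by auto
qed

section \<open>Hull area of tilted states\<close>

lemma Pair_vimage_shear:
  fixes K :: "(real \<times> real) set"
  shows "Pair x -` ((\<lambda>(x, y). (x, l * y + m * x + c)) ` K) = (\<lambda>y. l *\<^sub>R y + (m * x + c)) ` (Pair x -` K)"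
  by (force simp: image_iff)

lemma emeasure_shear:
  fixes K :: "(real \<times> real) set" and l m c :: real
  assumes K: "compact K"
  shows "emeasure lborel ((\<lambda>(x, y). (x, l * y + m * x + c)) ` K) = ennreal \<bar>l\<bar> * emeasure lborel K"
proof -
  define T where "T = (\<lambda>(x::real, y::real). (x, l * y + m * x + c))"
  have "continuous_on UNIV T" unfolding T_def case_prod_unfold by (intro continuous_intros)
  then have "compact (T ` K)"
    using compact_continuous_image[OF continuous_on_subset K] by blast
  then have TK: "T ` K \<in> sets (lborel \<Otimes>\<^sub>M lborel)"
    unfolding lborel_prod using borel_compact by simp
  have K_sets: "K \<in> sets (lborel \<Otimes>\<^sub>M lborel)"
    unfolding lborel_prod using borel_compact[OF K] by simp
  have slice: "Pair x -` (T ` K) = (\<lambda>y. l *\<^sub>R y + (m * x + c)) ` (Pair x -` K)" for x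
    unfolding T_def by (rule Pair_vimage_shear)
  have slice_measure: "emeasure lborel (Pair x -` (T ` K)) = ennreal \<bar>l\<bar> * emeasure lborel (Pair x -` K)" for x
  proof -
    have "emeasure lborel (Pair x -` (T ` K)) = emeasure lebesgue ((\<lambda>y. l *\<^sub>R y + (m * x + c)) ` (Pair x -` K))"
      using sets_Pair1[OF TK] slice by simp
    also have "\<dots> = ennreal \<bar>l\<bar> * emeasure lebesgue (Pair x -` K)"
      using emeasure_lebesgue_affine[of l "m * x + c" "Pair x -` K"] by simp
    also have "\<dots> = ennreal \<bar>l\<bar> * emeasure lborel (Pair x -` K)"
      using sets_Pair1[OF K_sets] by simp
    finally show ?thesis .
  qed
  have "emeasure lborel (T ` K) = (\<integral>\<^sup>+x. emeasure lborel (Pair x -` (T ` K)) \<partial>lborel)"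
    using lborel.emeasure_pair_measure_alt[OF TK] by (simp add: lborel_prod)
  also have "\<dots> = ennreal \<bar>l\<bar> * (\<integral>\<^sup>+x. emeasure lborel (Pair x -` K) \<partial>lborel)"
    unfolding slice_measure using lborel.measurable_emeasure_Pair[OF K_sets] by (rule nn_integral_cmult)
  also have "\<dots> = ennreal \<bar>l\<bar> * emeasure lborel K"
    using lborel.emeasure_pair_measure_alt[OF K_sets] by (simp add: lborel_prod)
  finally show ?thesis unfolding T_def .
qed

lemma hull_area_tilted:
  assumes "0 < d"
  shows "hull_area d eps (tilted d eps p l m) = \<bar>l\<bar> * hull_area d eps p"
proof -
  define P where "P = eps_s_ensemble d eps p"
  define L where "L = (\<lambda>(x::real, y::real). (x, l * y + m * x))"
  define c where "c = ln (tilt_partition d eps p l m)"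
  have "linear L"
    unfolding L_def by (intro linearI) (auto simp: algebra_simps case_prod_unfold)
  have T_eq: "(\<lambda>(x, y). (x, l * y + m * x + c)) ` S = (\<lambda>z. (0, c) + z) ` (L ` S)" for S
    unfolding L_def image_image by (intro image_cong) (auto simp: case_prod_unfold)
  have ensemble: "eps_s_ensemble d eps (tilted d eps p l m) = (\<lambda>(x, y). (x, l * y + m * x + c)) ` P"
    unfolding eps_s_ensemble_def P_def c_def image_image
    by (intro image_cong) (simp_all add: ln_tilted[OF assms] algebra_simps)
  have hull: "convex hull eps_s_ensemble d eps (tilted d eps p l m)
      = (\<lambda>(x, y). (x, l * y + m * x + c)) ` (convex hull P)"
    unfolding ensemble T_eq convex_hull_translation convex_hull_linear_image[OF \<open>linear L\<close>] by simp
  have "compact (convex hull P)"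
    unfolding P_def eps_s_ensemble_def by (intro finite_imp_compact_convex_hull) simp
  from emeasure_shear[OF this] show ?thesis
    unfolding hull_area_def hull measure_def P_def by (simp add: enn2real_mult)
qed

lemma geom_athermality_antimono:
  assumes p: "full_rank_passive d eps p" and r: "full_rank_passive d eps r"
    and d: "2 \<le> d" and nd: "nondegenerate d eps"
    and E: "energy d eps r \<le> energy d eps p" and S: "entropy d p \<le> entropy d r"
  shows "geom_athermality d eps (energy d eps r) (entropy d r)
    \<le> geom_athermality d eps (energy d eps p) (entropy d p)"
  unfolding geom_athermality_def
proof (rule cInf_mono)
  show "bdd_below {hull_area d eps q |q. full_rank_passive d eps q \<and> energy d eps q = energy d eps r
      \<and> entropy d q = entropy d r}"
    unfolding hull_area_def by (rule bdd_belowI[of _ 0]) auto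
  fix x assume "x \<in> {hull_area d eps q |q. full_rank_passive d eps q \<and> energy d eps q = energy d eps p
      \<and> entropy d q = entropy d p}"
  then obtain q where q: "full_rank_passive d eps q" "energy d eps q = energy d eps p"
    "entropy d q = entropy d p" "x = hull_area d eps q"
    by auto
  obtain l m where lm: "0 \<le> l" "l \<le> 1" "0 \<le> m" "energy d eps (tilted d eps q l m) = energy d eps r"
    "entropy d (tilted d eps q l m) = entropy d r"
    using exists_tilt_to_passive_point[OF q(1) r d nd] E S q(2,3) by auto
  have "hull_area d eps (tilted d eps q l m) = l * x"
    using hull_area_tilted[OF full_rank_passive_pos(3)[OF q(1)]] lm(1) q(4) by simp
  also have "\<dots> \<le> x"
    using lm(1,2) q(4) unfolding hull_area_def by (intro mult_left_le_one_le) auto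
  finally show "\<exists>y\<in>{hull_area d eps q |q. full_rank_passive d eps q \<and> energy d eps q = energy d eps r
      \<and> entropy d q = entropy d r}. y \<le> x"
    using full_rank_passive_tilted[OF q(1) lm(1,3)] lm(4,5) by blast
qed (use p in auto)

lemma W_max_antimono:
  assumes p: "full_rank_passive d eps p" and r: "full_rank_passive d eps r"
    and d: "2 \<le> d" and nd: "nondegenerate d eps"
    and E: "energy d eps r \<le> energy d eps p" and S: "entropy d p \<le> entropy d r"
  shows "W_max d eps (energy d eps r) (entropy d r) \<le> W_max d eps (energy d eps p) (entropy d p)"
proof -
  define \<beta>p \<beta>r where "\<beta>p = beta_max d eps (entropy d p)" and "\<beta>r = beta_max d eps (entropy d r)"
  note \<beta>p = beta_max_entropy[OF p d nd, folded \<beta>p_def]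
  note \<beta>r = beta_max_entropy[OF r d nd, folded \<beta>r_def]
  have "\<not> \<beta>p < \<beta>r"
    using entropy_gibbs_less[OF \<beta>p(1) _ d nd, of \<beta>r] \<beta>p(2) \<beta>r(2) S by auto
  then have "energy d eps (gibbs d eps \<beta>p) \<le> energy d eps (gibbs d eps \<beta>r)"
    using energy_gibbs_less[OF _ d nd, of \<beta>r \<beta>p] by (cases "\<beta>p = \<beta>r") auto
  then show ?thesis
    unfolding W_max_def \<beta>p_def[symmetric] \<beta>r_def[symmetric] using E by simp
qed

lemma Delta_S_max_antimono:
  assumes p: "full_rank_passive d eps p" and r: "full_rank_passive d eps r"
    and d: "2 \<le> d" and nd: "nondegenerate d eps"
    and E: "energy d eps r \<le> energy d eps p" and S: "entropy d p \<le> entropy d r"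
  shows "Delta_S_max d eps (energy d eps r) (entropy d r) \<le> Delta_S_max d eps (energy d eps p) (entropy d p)"
proof -
  define \<beta>p \<beta>r where "\<beta>p = beta_min d eps (energy d eps p)" and "\<beta>r = beta_min d eps (energy d eps r)"
  note \<beta>p = beta_min_energy[OF p d nd, folded \<beta>p_def]
  note \<beta>r = beta_min_energy[OF r d nd, folded \<beta>r_def]
  have "\<not> \<beta>r < \<beta>p"
    using energy_gibbs_less[OF _ d nd, of \<beta>r \<beta>p] \<beta>p(2) \<beta>r(2) E by auto
  then have "entropy d (gibbs d eps \<beta>r) \<le> entropy d (gibbs d eps \<beta>p)"
    using entropy_gibbs_less[OF \<beta>p(1) _ d nd, of \<beta>r] by (cases "\<beta>p = \<beta>r") auto
  then show ?thesis
    unfolding Delta_S_max_def \<beta>p_def[symmetric] \<beta>r_def[symmetric] using S by simp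
qed

lemma full_rank_passive_dim_lt_2:
  assumes "full_rank_passive d eps r" "d < 2"
  shows "energy d eps r = eps 0" "entropy d r = 0"
proof -
  note r = full_rank_passive_pos[OF assms(1)]
  have "d = 1" using r(3) assms(2) by simp
  with r(2) show "energy d eps r = eps 0" "entropy d r = 0"
    unfolding energy_def entropy_def by simp_all
qed

lemma athermality_measures_antimono:
  assumes p: "full_rank_passive d eps p" and r: "full_rank_passive d eps r" and nd: "nondegenerate d eps"
    and "energy d eps r \<le> energy d eps p" "entropy d p \<le> entropy d r"
  shows "geom_athermality d eps (energy d eps r) (entropy d r)
      \<le> geom_athermality d eps (energy d eps p) (entropy d p)
    \<and> W_max d eps (energy d eps r) (entropy d r) \<le> W_max d eps (energy d eps p) (entropy d p)
    \<and> Delta_S_max d eps (energy d eps r) (entropy d r) \<le> Delta_S_max d eps (energy d eps p) (entropy d p)"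
proof -
  consider "2 \<le> d" | "energy d eps r = energy d eps p" "entropy d r = entropy d p"
    using full_rank_passive_dim_lt_2[OF p] full_rank_passive_dim_lt_2[OF r] by fastforce
  then show ?thesis
    by cases (simp_all add: geom_athermality_antimono[OF p r _ nd assms(4,5)]
        W_max_antimono[OF p r _ nd assms(4,5)] Delta_S_max_antimono[OF p r _ nd assms(4,5)])
qed

lemma DERIV_within_nonneg_imp_increasing:
  fixes f :: "real \<Rightarrow> real"
  assumes deriv: "\<And>x. x \<in> {a..b} \<Longrightarrow> \<exists>u. (f has_real_derivative u) (at x within {a..b}) \<and> 0 \<le> u"
    and "a \<le> s" "s \<le> t" "t \<le> b"
  shows "f s \<le> f t"
proof (rule DERIV_nonneg_imp_increasing_open[OF \<open>s \<le> t\<close>])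
  fix x assume "s < x" "x < t"
  then have "x \<in> {a..b}" "at x within {a..b} = at x"
    using assms(2-4) by (auto intro: at_within_Icc_at)
  then show "\<exists>y. (f has_real_derivative y) (at x) \<and> 0 \<le> y"
    using deriv by metis
next
  have "continuous_on {a..b} f"
    unfolding continuous_on_eq_continuous_within using deriv DERIV_continuous by blast
  then show "continuous_on {s..t} f"
    using assms(2-4) by (auto intro: continuous_on_subset)
qed

lemma activation_trajectory_monotone:
  assumes "activation_trajectory d eps a b Ef Sf" "a \<le> s" "s \<le> t" "t \<le> b"
  shows "Ef t \<le> Ef s" "Sf s \<le> Sf t"
proof -
  have deriv: "\<forall>x\<in>{a..b}. \<exists>uE uS. (Ef has_real_derivative uE) (at x within {a..b})
      \<and> (Sf has_real_derivative uS) (at x within {a..b}) \<and> uE \<le> 0 \<and> 0 \<le> uS"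
    using assms(1) unfolding activation_trajectory_def by blast
  have "(\<lambda>x. - Ef x) s \<le> (\<lambda>x. - Ef x) t"
    using deriv by (intro DERIV_within_nonneg_imp_increasing[OF _ assms(2-4)]) (fastforce intro: DERIV_minus)
  then show "Ef t \<le> Ef s" by simp
  show "Sf s \<le> Sf t"
    using deriv by (intro DERIV_within_nonneg_imp_increasing[OF _ assms(2-4)]) fastforce
qed

lemma activation_trajectory_antimono:
  assumes nd: "nondegenerate d eps" and traj: "activation_trajectory d eps a b Ef Sf"
  shows "antimono_on {a..b} (\<lambda>t. geom_athermality d eps (Ef t) (Sf t))"
    "antimono_on {a..b} (\<lambda>t. W_max d eps (Ef t) (Sf t))"
    "antimono_on {a..b} (\<lambda>t. Delta_S_max d eps (Ef t) (Sf t))"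
proof -
  have "geom_athermality d eps (Ef t) (Sf t) \<le> geom_athermality d eps (Ef s) (Sf s)
      \<and> W_max d eps (Ef t) (Sf t) \<le> W_max d eps (Ef s) (Sf s)
      \<and> Delta_S_max d eps (Ef t) (Sf t) \<le> Delta_S_max d eps (Ef s) (Sf s)"
    if "s \<in> {a..b}" "t \<in> {a..b}" "s \<le> t" for s t
  proof -
    have "(Ef s, Sf s) \<in> passive_region d eps" "(Ef t, Sf t) \<in> passive_region d eps"
      using traj that(1,2) unfolding activation_trajectory_def by auto
    then obtain p r where "full_rank_passive d eps p" "Ef s = energy d eps p" "Sf s = entropy d p"
      "full_rank_passive d eps r" "Ef t = energy d eps r" "Sf t = entropy d r"
      unfolding passive_region_def by auto
    then show ?thesis
      using athermality_measures_antimono[of d eps p r, OF _ _ nd]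
        activation_trajectory_monotone[OF traj, of s t] that by auto
  qed
  then show "antimono_on {a..b} (\<lambda>t. geom_athermality d eps (Ef t) (Sf t))"
    "antimono_on {a..b} (\<lambda>t. W_max d eps (Ef t) (Sf t))"
    "antimono_on {a..b} (\<lambda>t. Delta_S_max d eps (Ef t) (Sf t))"
    by (auto intro!: monotone_onI)
qed

lemma antimono_on_diff_mult_nonneg:
  fixes f g :: "'a::linorder \<Rightarrow> real"
  assumes "antimono_on I f" "antimono_on I g" "s \<in> I" "t \<in> I"
  shows "0 \<le> (f t - f s) * (g t - g s)"
proof (cases "s \<le> t")
  case True
  then show ?thesis
    using assms monotone_onD[OF assms(1)] monotone_onD[OF assms(2)] by (simp add: mult_nonpos_nonpos)
next
  case False
  then show ?thesis
    using assms monotone_onD[OF assms(1), of t s] monotone_onD[OF assms(2), of t s] by simp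
qed

theorem theorem5:
  fixes d :: nat and eps :: "nat \<Rightarrow> real" and a b :: real and Ef Sf :: "real \<Rightarrow> real"
  assumes "nondegenerate d eps"
    and "activation_trajectory d eps a b Ef Sf"
  shows "\<forall>s\<in>{a..b}. \<forall>t\<in>{a..b}.
           0 \<le> (geom_athermality d eps (Ef t) (Sf t) - geom_athermality d eps (Ef s) (Sf s))
                * (W_max d eps (Ef t) (Sf t) - W_max d eps (Ef s) (Sf s))
         \<and> 0 \<le> (geom_athermality d eps (Ef t) (Sf t) - geom_athermality d eps (Ef s) (Sf s))
                * (Delta_S_max d eps (Ef t) (Sf t) - Delta_S_max d eps (Ef s) (Sf s))"
  using antimono_on_diff_mult_nonneg[OF activation_trajectory_antimono(1,2)[OF assms]]
    antimono_on_diff_mult_nonneg[OF activation_trajectory_antimono(1,3)[OF assms]]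
  by blast

end
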